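(* Let $-\infty\le a<b\le\infty$, let $\phi:(a,b)\to\mathbb{R}$ be strictly convex and continuously differentiable, and for $x,\theta\in(a,b)$ let $d_\phi(x,\theta)=\phi(x)-\phi(\theta)-\phi'(\theta)(x-\theta)$. Assume there is $\zeta\in(0,\infty]$ such that for every $\theta\in(a,b)$, $$\lim_{x\to a^+}d_\phi(x,\theta)=\lim_{x\to b^-}d_\phi(x,\theta)=\zeta.$$ Let $g:[0,\infty)\to[0,\infty)$ be measurable and consider the continuous Bregman distribution $$p(x\mid\theta)=\frac{1}{C(\theta)}\,\frac{\phi'(x)-\phi'(\theta)}{x-\theta}\,g\big(d_\phi(x,\theta)\big),\qquad x\in(a,b),$$ where $\theta\in(a,b)$ and $0<C(\theta)<\infty$ is the normalizing constant (the ratio is interpreted as a nonnegative function of $x$; its value at $x=\theta$ is irrelevant). Let $f:[0,\infty)\to\mathbb{R}$ be differentiable. If $$\int_0^\infty g(t)\,|f'(t)|\,dt<\infty,$$ then $$\int_a^b p(x\mid\theta)\, f'\big(d_\phi(x,\theta)\big)\,(x-\theta)\,dx=0,$$ i.e. the estimating equation (with the same Bregman divergence $d_\phi$ used for estimation as in the model) holds without any bias-correction term.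
   Context: The parameter is estimated by minimizing $\int p(x)\,f(d_\phi(x,\theta))\,dx$; for a Bregman divergence $d_\phi$ the stationarity condition is the displayed estimating equation, and "unbiased" means it holds at the true parameter of the model. *)

theory Defs
  imports "HOL-Analysis.Analysis"
begin

definition strictly_convex_on :: "real set \<Rightarrow> (real \<Rightarrow> real) \<Rightarrow> bool" where
  "strictly_convex_on S f \<longleftrightarrow>
     (\<forall>x\<in>S. \<forall>y\<in>S. \<forall>u::real. x \<noteq> y \<longrightarrow> 0 < u \<longrightarrow> u < 1 \<longrightarrow>
        f (u * x + (1 - u) * y) < u * f x + (1 - u) * f y)"

definition ereal_ioo :: "ereal \<Rightarrow> ereal \<Rightarrow> real set" where
  "ereal_ioo a b = {x. a < ereal x \<and> ereal x < b}"

definition from_right_of :: "ereal \<Rightarrow> real filter" where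
  "from_right_of a = (if a = -\<infinity> then at_bot else at_right (real_of_ereal a))"

definition from_left_of :: "ereal \<Rightarrow> real filter" where
  "from_left_of b = (if b = \<infinity> then at_top else at_left (real_of_ereal b))"

definition bregman :: "(real \<Rightarrow> real) \<Rightarrow> (real \<Rightarrow> real) \<Rightarrow> real \<Rightarrow> real \<Rightarrow> real" where
  "bregman \<phi> \<phi>' x \<theta> = \<phi> x - \<phi> \<theta> - \<phi>' \<theta> * (x - \<theta>)"

text \<open>Unnormalised continuous Bregman density kernel; the value at x = theta is irrelevant
  (here it is 0 by division by zero).\<close>
definition bregman_kernel ::
  "(real \<Rightarrow> real) \<Rightarrow> (real \<Rightarrow> real) \<Rightarrow> (real \<Rightarrow> real) \<Rightarrow> real \<Rightarrow> real \<Rightarrow> real" where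
  "bregman_kernel \<phi> \<phi>' g \<theta> x = (\<phi>' x - \<phi>' \<theta>) / (x - \<theta>) * g (bregman \<phi> \<phi>' x \<theta>)"

end

theory Submission
  imports Defs
begin

(* Write D x = d_phi(x, theta).  Then D' x = phi' x - phi' theta, so the factor x - theta cancels
   the denominator of the density and the integrand becomes D' x * g (D x) * f' (D x) / C.
   Strict convexity makes D strictly decreasing on (a, theta) and strictly increasing on
   (theta, b), and the boundary behaviour of d_phi makes it map each of these branches onto
   (0, zeta).  Substituting u = D x on the two branches gives the integral of g f' over (0, zeta)
   and its negative, both finite by hypothesis, so they cancel. *)

lemma ereal_ioo_eq_einterval: "ereal_ioo a b = einterval a b"
  by (simp add: ereal_ioo_def einterval_def)

lemma convex_einterval: "convex (einterval a b)"
proof -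
  have "z \<in> einterval a b"
    if "x \<in> einterval a b" "y \<in> einterval a b" "x \<le> z" "z \<le> y" for x y z
    using that unfolding einterval_iff by (meson ereal_less_eq(3) less_le_trans le_less_trans)
  then show ?thesis unfolding is_interval_convex_1[symmetric] is_interval_1 by blast
qed

lemma strictly_convex_on_imp_convex_on:
  assumes "strictly_convex_on S \<phi>" and "convex S"
  shows "convex_on S \<phi>"
proof (rule convex_onI[OF _ \<open>convex S\<close>])
  fix t :: real and x y assume t: "0 < t" "t < 1" and xy: "x \<in> S" "y \<in> S"
  show "\<phi> ((1 - t) *\<^sub>R x + t *\<^sub>R y) \<le> (1 - t) * \<phi> x + t * \<phi> y"
  proof (cases "x = y")
    case False
    with assms(1) xy t show ?thesis
      unfolding strictly_convex_on_def by (smt (verit) real_scaleR_def)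
  qed (simp add: algebra_simps)
qed

lemma strictly_convex_on_above_tangent:
  assumes sc: "strictly_convex_on S \<phi>" and "convex S" and "open S"
    and deriv: "\<And>x. x \<in> S \<Longrightarrow> (\<phi> has_real_derivative \<phi>' x) (at x)"
    and x: "x \<in> S" and y: "y \<in> S" and "x \<noteq> y"
  shows "\<phi> x + \<phi>' x * (y - x) < \<phi> y"
proof -
  \<comment> \<open>the weak tangent inequality at the midpoint, combined with strict convexity there\<close>
  define m where "m = (1/2) * x + (1 - 1/2) * y"
  have "m \<in> S"
    using convexD[OF \<open>convex S\<close> x y, of "1/2" "1/2"] by (simp add: m_def)
  have "\<phi>' x * (m - x) \<le> \<phi> m - \<phi> x"
    using strictly_convex_on_imp_convex_on[OF sc \<open>convex S\<close>] \<open>m \<in> S\<close> x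
    by (intro convex_on_imp_above_tangent)
       (auto simp: interior_open[OF \<open>open S\<close>] convex_connected[OF \<open>convex S\<close>]
             intro: has_field_derivative_at_within[OF deriv])
  moreover have "\<phi> m < (1/2) * \<phi> x + (1 - 1/2) * \<phi> y"
    using sc[unfolded strictly_convex_on_def, rule_format, OF x y \<open>x \<noteq> y\<close>, of "1/2"]
    by (simp add: m_def)
  ultimately show ?thesis unfolding m_def by (simp add: algebra_simps)
qed

lemma strictly_convex_on_deriv_strict_mono:
  assumes "strictly_convex_on S \<phi>" and "convex S" and "open S"
    and "\<And>x. x \<in> S \<Longrightarrow> (\<phi> has_real_derivative \<phi>' x) (at x)"
    and x: "x \<in> S" and y: "y \<in> S" and "x < y"
  shows "\<phi>' x < \<phi>' y"
proof -
  have "\<phi> x + \<phi>' x * (y - x) < \<phi> y" "\<phi> y + \<phi>' y * (x - y) < \<phi> x"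
    using strictly_convex_on_above_tangent[OF assms(1-4)] x y \<open>x < y\<close> by auto
  then have "0 < (\<phi>' y - \<phi>' x) * (y - x)" by (simp add: algebra_simps)
  with \<open>x < y\<close> show ?thesis by (simp add: zero_less_mult_iff)
qed

lemma from_left_of_neq_bot: "b \<noteq> -\<infinity> \<Longrightarrow> from_left_of b \<noteq> bot"
  by (cases b) (auto simp: from_left_of_def)

lemma from_right_of_neq_bot: "a \<noteq> \<infinity> \<Longrightarrow> from_right_of a \<noteq> bot"
  by (cases a) (auto simp: from_right_of_def)

lemma eventually_from_left_of:
  assumes "ereal y < b"
  shows "eventually (\<lambda>z. y < z \<and> ereal z < b) (from_left_of b)"
proof (cases b)
  case (real r)
  with assms have "eventually (\<lambda>z. y < z \<and> z < r) (at_left r)"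
    using eventually_at_left_real[of y r] by (simp add: eventually_mono)
  with real show ?thesis by (simp add: from_left_of_def)
qed (use assms in \<open>simp_all add: from_left_of_def eventually_gt_at_top\<close>)

lemma eventually_from_right_of:
  assumes "a < ereal y"
  shows "eventually (\<lambda>z. z < y \<and> a < ereal z) (from_right_of a)"
proof (cases a)
  case (real r)
  with assms have "eventually (\<lambda>z. z < y \<and> r < z) (at_right r)"
    using eventually_at_right_real[of r y] by (simp add: eventually_mono)
  with real show ?thesis by (simp add: from_right_of_def)
qed (use assms in \<open>auto simp: from_right_of_def eventually_at_bot_dense\<close>)

lemma image_eq_einterval_0_of_tendsto:
  fixes D :: "real \<Rightarrow> real" and F :: "real filter" and \<zeta> :: ereal
  assumes "F \<noteq> bot" and "S \<noteq> {}"
    and exceeds: "\<And>x. x \<in> S \<Longrightarrow> eventually (\<lambda>z. z \<in> S \<and> D x < D z) F"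
    and lim: "((\<lambda>x. ereal (D x)) \<longlongrightarrow> \<zeta>) F"
    and pos: "\<And>x. x \<in> S \<Longrightarrow> 0 < D x"
    and conn: "connected (insert 0 (D ` S))"
  shows "D ` S = einterval 0 \<zeta>"
proof (intro equalityI subsetI)
  fix u assume "u \<in> D ` S"
  then obtain x where x: "x \<in> S" and u: "u = D x" by blast
  obtain z where z: "z \<in> S" "D x < D z"
    using eventually_happens'[OF \<open>F \<noteq> bot\<close> exceeds[OF x]] by blast
  have "eventually (\<lambda>i. ereal (D z) \<le> ereal (D i)) F"
    using exceeds[OF \<open>z \<in> S\<close>] by (rule eventually_mono) simp
  then have "ereal (D z) \<le> \<zeta>" by (rule tendsto_lowerbound[OF lim _ \<open>F \<noteq> bot\<close>])
  with z pos[OF x] show "u \<in> einterval 0 \<zeta>"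
    by (auto simp: u einterval_iff intro: less_le_trans[of _ "ereal (D z)"])
next
  fix u assume "u \<in> einterval 0 \<zeta>"
  then have u: "0 < u" "ereal u < \<zeta>" by (auto simp: einterval_iff)
  obtain x where "x \<in> S" using \<open>S \<noteq> {}\<close> by blast
  have "eventually (\<lambda>z. ereal u < ereal (D z) \<and> z \<in> S) F"
    using order_tendstoD(1)[OF lim u(2)] exceeds[OF \<open>x \<in> S\<close>] by eventually_elim auto
  then obtain z where "u < D z" "z \<in> S"
    using eventually_happens'[OF \<open>F \<noteq> bot\<close>] by auto
  then have "u \<in> insert 0 (D ` S)"
    using conn u(1) unfolding is_interval_connected_1[symmetric] is_interval_1
    by (meson imageI insertI1 insertI2 less_le)
  with u(1) show "u \<in> D ` S" by simp
qed

lemma set_integrable_lborel_imp_lebesgue: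
  fixes f :: "'a::euclidean_space \<Rightarrow> 'b::{banach, second_countable_topology}"
  assumes "set_integrable lborel S f"
  shows "set_integrable lebesgue S f"
  using assms integrable_completion[OF borel_measurable_integrable]
  unfolding set_integrable_def by blast

lemma set_integrable_lebesgue_imp_lborel:
  fixes f :: "'a::euclidean_space \<Rightarrow> 'b::{banach, second_countable_topology}"
  assumes "set_integrable lebesgue S f"
    and meas: "(\<lambda>x. indicator S x *\<^sub>R f x) \<in> borel_measurable borel"
  shows "set_integrable lborel S f"
    and "(LINT x:S|lborel. f x) = (LINT x:S|lebesgue. f x)"
proof -
  from meas have "(\<lambda>x. indicator S x *\<^sub>R f x) \<in> borel_measurable lborel"
    by (simp add: measurable_lborel2)
  with assms(1) show "set_integrable lborel S f" "(LINT x:S|lborel. f x) = (LINT x:S|lebesgue. f x)"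
    unfolding set_integrable_def set_lebesgue_integral_def
    by (simp_all add: integrable_completion integral_completion)
qed

lemma set_integral_change_of_variables_1:
  fixes D h G :: "real \<Rightarrow> real"
  assumes "S \<in> sets lebesgue"
    and "\<And>x. x \<in> S \<Longrightarrow> (D has_real_derivative h x) (at x within S)"
    and "inj_on D S" and G: "G absolutely_integrable_on D ` S"
  shows "(\<lambda>x. \<bar>h x\<bar> * G (D x)) absolutely_integrable_on S"
    and "(LINT x:S|lebesgue. \<bar>h x\<bar> * G (D x)) = (LINT u:D ` S|lebesgue. G u)"
proof -
  have "(\<lambda>x. \<bar>h x\<bar> * G (D x)) absolutely_integrable_on S
      \<and> integral S (\<lambda>x. \<bar>h x\<bar> * G (D x)) = integral (D ` S) G"
    using has_absolute_integral_change_of_variables_1'[OF assms(1-3)] G by blast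
  then show "(\<lambda>x. \<bar>h x\<bar> * G (D x)) absolutely_integrable_on S"
    and "(LINT x:S|lebesgue. \<bar>h x\<bar> * G (D x)) = (LINT u:D ` S|lebesgue. G u)"
    using G by (simp_all add: set_lebesgue_integral_eq_integral)
qed

lemma set_integral_opposite_branches_cancel:
  fixes D h G :: "real \<Rightarrow> real"
  assumes S: "S\<^sub>1 \<in> sets lebesgue" "S\<^sub>2 \<in> sets lebesgue" "S\<^sub>1 \<inter> S\<^sub>2 = {}"
    and deriv: "\<And>x. x \<in> S\<^sub>1 \<union> S\<^sub>2 \<Longrightarrow> (D has_real_derivative h x) (at x)"
    and inj: "inj_on D S\<^sub>1" "inj_on D S\<^sub>2"
    and image: "D ` S\<^sub>1 = T" "D ` S\<^sub>2 = T"
    and G: "G absolutely_integrable_on T"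
    and sign: "\<And>x. x \<in> S\<^sub>1 \<Longrightarrow> 0 < h x" "\<And>x. x \<in> S\<^sub>2 \<Longrightarrow> h x < 0"
  shows "(\<lambda>x. h x * G (D x)) absolutely_integrable_on (S\<^sub>1 \<union> S\<^sub>2)"
    and "(LINT x:S\<^sub>1 \<union> S\<^sub>2|lebesgue. h x * G (D x)) = 0"
proof -
  have cv1: "(\<lambda>x. \<bar>h x\<bar> * G (D x)) absolutely_integrable_on S\<^sub>1"
      "(LINT x:S\<^sub>1|lebesgue. \<bar>h x\<bar> * G (D x)) = (LINT u:T|lebesgue. G u)"
    using set_integral_change_of_variables_1[OF S(1) _ inj(1), of h G] deriv G
    unfolding image(1) by (auto intro: has_field_derivative_at_within)
  have cv2: "(\<lambda>x. \<bar>h x\<bar> * G (D x)) absolutely_integrable_on S\<^sub>2"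
      "(LINT x:S\<^sub>2|lebesgue. \<bar>h x\<bar> * G (D x)) = (LINT u:T|lebesgue. G u)"
    using set_integral_change_of_variables_1[OF S(2) _ inj(2), of h G] deriv G
    unfolding image(2) by (auto intro: has_field_derivative_at_within)
  have int1: "set_integrable lebesgue S\<^sub>1 (\<lambda>x. h x * G (D x))"
    using cv1(1) by (rule set_integrable_cong[THEN iffD1, rotated -1]) (simp_all add: sign(1) abs_of_pos)
  have int2: "set_integrable lebesgue S\<^sub>2 (\<lambda>x. h x * G (D x))"
    using set_integrable_mult_right[OF cv2(1), of "-1"]
    by (rule set_integrable_cong[THEN iffD1, rotated -1]) (simp_all add: sign(2) abs_of_neg)
  have "(LINT x:S\<^sub>1|lebesgue. h x * G (D x)) = (LINT x:S\<^sub>1|lebesgue. \<bar>h x\<bar> * G (D x))"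
    by (rule set_lebesgue_integral_cong) (simp_all add: S(1) sign(1) abs_of_pos)
  moreover have "(LINT x:S\<^sub>2|lebesgue. h x * G (D x)) = (LINT x:S\<^sub>2|lebesgue. -1 * (\<bar>h x\<bar> * G (D x)))"
    by (rule set_lebesgue_integral_cong) (simp_all add: S(2) sign(2) abs_of_neg)
  ultimately show "(LINT x:S\<^sub>1 \<union> S\<^sub>2|lebesgue. h x * G (D x)) = 0"
    using set_integral_Un[OF S(3) int1 int2] cv1(2) cv2(2) by (simp add: set_integral_uminus[OF cv2(1)])
  show "(\<lambda>x. h x * G (D x)) absolutely_integrable_on (S\<^sub>1 \<union> S\<^sub>2)"
    using set_integrable_Un[OF int1 int2 S(1,2)] .
qed

lemma borel_measurable_deriv_on_nonneg:
  fixes f f' :: "real \<Rightarrow> real"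
  assumes deriv: "\<And>t. 0 \<le> t \<Longrightarrow> (f has_real_derivative f' t) (at t within {0..})"
  shows "(\<lambda>t. f' (max 0 t)) \<in> borel_measurable borel"
proof -
  define F where "F t = f (max 0 t)" for t
  have "continuous_on {0..} f"
    using deriv by (metis DERIV_continuous atLeast_iff continuous_on_eq_continuous_within)
  then have "continuous_on UNIV F"
    unfolding F_def by (rule continuous_on_compose2) (auto intro!: continuous_intros)
  then have F_meas: "F \<in> borel_measurable borel" by (rule borel_measurable_continuous_onI)
  \<comment> \<open>f' is the pointwise limit of the measurable right difference quotients of F\<close>
  show ?thesis
  proof (rule borel_measurable_LIMSEQ_real)
    fix t :: real
    let ?s = "max 0 t"
    have "((\<lambda>y. (f y - f ?s) / (y - ?s)) \<longlongrightarrow> f' ?s) (at ?s within {0..})"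
      using deriv[of ?s] by (simp add: has_field_derivative_iff)
    moreover have "filterlim (\<lambda>n::nat. ?s + 1 / Suc n) (at ?s within {0..}) sequentially"
    proof (subst filterlim_at, intro conjI)
      show "\<forall>\<^sub>F n in sequentially. ?s + 1 / real (Suc n) \<in> {0..} \<and> ?s + 1 / real (Suc n) \<noteq> ?s"
        by (auto intro!: always_eventually add_nonneg_nonneg)
      have "(\<lambda>n. ?s + 1 / real (Suc n)) \<longlonglongrightarrow> ?s + 0"
        by (intro tendsto_intros LIMSEQ_Suc[OF lim_inverse_n'[unfolded inverse_eq_divide]])
      then show "(\<lambda>n. ?s + 1 / real (Suc n)) \<longlonglongrightarrow> ?s" by simp
    qed
    ultimately have "(\<lambda>n. (f (?s + 1 / Suc n) - f ?s) / ((?s + 1 / Suc n) - ?s)) \<longlonglongrightarrow> f' ?s"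
      by (rule filterlim_compose[unfolded o_def])
    moreover have "(f (?s + 1 / Suc n) - f ?s) / ((?s + 1 / Suc n) - ?s)
        = (F (?s + 1 / Suc n) - F ?s) * Suc n" for n
    proof -
      have "0 \<le> ?s + 1 / Suc n" by (intro add_nonneg_nonneg) auto
      then show ?thesis unfolding F_def by (simp add: max_def divide_simps)
    qed
    ultimately show "(\<lambda>n. (F (?s + 1 / Suc n) - F ?s) * Suc n) \<longlonglongrightarrow> f' ?s"
      by simp
  next
    fix n :: nat
    show "(\<lambda>t. (F (max 0 t + 1 / Suc n) - F (max 0 t)) * Suc n) \<in> borel_measurable borel"
      using F_meas by measurable
  qed
qed

lemma set_integrable_weighted_deriv_on_nonneg:
  fixes g f f' :: "real \<Rightarrow> real"
  assumes "g \<in> borel_measurable (restrict_space lborel {0..})"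
    and g_nonneg: "\<And>t. 0 \<le> t \<Longrightarrow> 0 \<le> g t"
    and "\<And>t. 0 \<le> t \<Longrightarrow> (f has_real_derivative f' t) (at t within {0..})"
    and finite: "(\<integral>\<^sup>+ t\<in>{0..}. ennreal (g t * \<bar>f' t\<bar>) \<partial>lborel) < \<infinity>"
  shows "set_integrable lborel {0..} (\<lambda>t. g t * f' t)"
proof -
  have "(\<lambda>t::real. max 0 t) \<in> measurable borel (restrict_space lborel {0..})"
    by (intro measurable_restrict_space2) (auto intro!: borel_measurable_continuous_onI continuous_intros)
  from measurable_comp[OF this assms(1)]
  have [measurable]: "(\<lambda>t. g (max 0 t)) \<in> borel_measurable borel" by (simp add: o_def)
  note [measurable] = borel_measurable_deriv_on_nonneg[OF assms(3)]
  have eq: "indicator {0..} t *\<^sub>R (g t * f' t) = indicator {0..} t *\<^sub>R (g (max 0 t) * f' (max 0 t))"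
    for t :: real
    by (simp add: indicator_def)
  show ?thesis
    unfolding set_integrable_def eq
  proof (rule integrableI_bounded)
    show "(\<lambda>t. indicator {0..} t *\<^sub>R (g (max 0 t) * f' (max 0 t))) \<in> borel_measurable lborel"
      unfolding measurable_lborel2 by measurable
    have "ennreal (norm (indicator {0..} t *\<^sub>R (g (max 0 t) * f' (max 0 t))))
        = ennreal (g t * \<bar>f' t\<bar>) * indicator {0..} t" for t :: real
      by (cases "0 \<le> t") (auto simp: abs_mult g_nonneg max_def)
    with finite
    show "(\<integral>\<^sup>+ t. ennreal (norm (indicator {0..} t *\<^sub>R (g (max 0 t) * f' (max 0 t)))) \<partial>lborel) < \<infinity>"
      by simp
  qed
qed

locale bregman_interval =
  fixes a b :: ereal and \<phi> \<phi>' :: "real \<Rightarrow> real"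
  assumes strictly_convex: "strictly_convex_on (einterval a b) \<phi>"
    and has_deriv: "\<And>x. x \<in> einterval a b \<Longrightarrow> (\<phi> has_real_derivative \<phi>' x) (at x)"
begin

lemma above_tangent:
  "x \<in> einterval a b \<Longrightarrow> y \<in> einterval a b \<Longrightarrow> x \<noteq> y \<Longrightarrow> \<phi> x + \<phi>' x * (y - x) < \<phi> y"
  by (rule strictly_convex_on_above_tangent[OF strictly_convex convex_einterval open_einterval has_deriv])

lemma deriv_strict_mono:
  "x \<in> einterval a b \<Longrightarrow> y \<in> einterval a b \<Longrightarrow> x < y \<Longrightarrow> \<phi>' x < \<phi>' y"
  by (rule strictly_convex_on_deriv_strict_mono[OF strictly_convex convex_einterval open_einterval has_deriv])

lemma bregman_pos:
  "\<theta> \<in> einterval a b \<Longrightarrow> x \<in> einterval a b \<Longrightarrow> x \<noteq> \<theta> \<Longrightarrow> 0 < bregman \<phi> \<phi>' x \<theta>"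
  using above_tangent[of \<theta> x] by (simp add: bregman_def)

lemma bregman_nonneg:
  "\<theta> \<in> einterval a b \<Longrightarrow> x \<in> einterval a b \<Longrightarrow> 0 \<le> bregman \<phi> \<phi>' x \<theta>"
  using bregman_pos[of \<theta> x] by (cases "x = \<theta>") (auto simp: bregman_def)

lemma bregman_strict_mono_right:
  assumes "x \<in> einterval a b" "y \<in> einterval a b" "\<theta> \<in> einterval a b" "\<theta> \<le> x" "x < y"
  shows "bregman \<phi> \<phi>' x \<theta> < bregman \<phi> \<phi>' y \<theta>"
proof -
  have "\<phi>' \<theta> \<le> \<phi>' x" using deriv_strict_mono[of \<theta> x] assms by (cases "x = \<theta>") auto
  then have "\<phi>' \<theta> * (y - x) \<le> \<phi>' x * (y - x)" using assms by (intro mult_right_mono) auto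
  with above_tangent[of x y] assms show ?thesis by (simp add: bregman_def algebra_simps)
qed

lemma bregman_strict_antimono_left:
  assumes "x \<in> einterval a b" "y \<in> einterval a b" "\<theta> \<in> einterval a b" "x \<le> \<theta>" "y < x"
  shows "bregman \<phi> \<phi>' x \<theta> < bregman \<phi> \<phi>' y \<theta>"
proof -
  have "\<phi>' x \<le> \<phi>' \<theta>" using deriv_strict_mono[of x \<theta>] assms by (cases "x = \<theta>") auto
  then have "\<phi>' \<theta> * (y - x) \<le> \<phi>' x * (y - x)" using assms by (intro mult_right_mono_neg) auto
  with above_tangent[of x y] assms show ?thesis by (simp add: bregman_def algebra_simps)
qed

lemma inj_on_bregman_right:
  "\<theta> \<in> einterval a b \<Longrightarrow> inj_on (\<lambda>x. bregman \<phi> \<phi>' x \<theta>) {x \<in> einterval a b. \<theta> < x}"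
  by (rule linorder_inj_onI') (auto dest: bregman_strict_mono_right[of _ _ \<theta>])

lemma inj_on_bregman_left:
  "\<theta> \<in> einterval a b \<Longrightarrow> inj_on (\<lambda>x. bregman \<phi> \<phi>' x \<theta>) {x \<in> einterval a b. x < \<theta>}"
  by (rule linorder_inj_onI') (auto dest: bregman_strict_antimono_left[of _ _ \<theta>])

lemma has_real_derivative_bregman:
  "x \<in> einterval a b \<Longrightarrow> ((\<lambda>x. bregman \<phi> \<phi>' x \<theta>) has_real_derivative \<phi>' x - \<phi>' \<theta>) (at x)"
  unfolding bregman_def by (auto intro!: derivative_eq_intros has_deriv)

lemma continuous_on_bregman: "continuous_on (einterval a b) (\<lambda>x. bregman \<phi> \<phi>' x \<theta>)"
  using has_real_derivative_bregman
  by (intro continuous_at_imp_continuous_on) (auto intro: DERIV_isCont)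

lemma connected_insert_0_image_bregman:
  assumes "\<theta> \<in> einterval a b" and "S \<subseteq> einterval a b" and "connected (insert \<theta> S)"
  shows "connected (insert 0 ((\<lambda>x. bregman \<phi> \<phi>' x \<theta>) ` S))"
proof -
  have "insert 0 ((\<lambda>x. bregman \<phi> \<phi>' x \<theta>) ` S) = (\<lambda>x. bregman \<phi> \<phi>' x \<theta>) ` insert \<theta> S"
    by (simp add: bregman_def)
  moreover have "continuous_on (insert \<theta> S) (\<lambda>x. bregman \<phi> \<phi>' x \<theta>)"
    using continuous_on_subset[OF continuous_on_bregman] assms by auto
  ultimately show ?thesis using connected_continuous_image assms(3) by metis
qed

lemma image_bregman_right:
  assumes \<theta>: "\<theta> \<in> einterval a b"
    and lim: "((\<lambda>x. ereal (bregman \<phi> \<phi>' x \<theta>)) \<longlongrightarrow> \<zeta>) (from_left_of b)"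
  shows "(\<lambda>x. bregman \<phi> \<phi>' x \<theta>) ` {x \<in> einterval a b. \<theta> < x} = einterval 0 \<zeta>"
proof (rule image_eq_einterval_0_of_tendsto[OF _ _ _ lim])
  have in_I: "z \<in> einterval a b" if "x \<in> einterval a b" "x < z" "ereal z < b" for x z
    using that by (auto simp: einterval_iff intro: less_trans)
  from \<theta> show "from_left_of b \<noteq> bot"
    by (intro from_left_of_neq_bot) (auto simp: einterval_iff)
  from \<theta> obtain z where "\<theta> < z" "ereal z < b"
    using eventually_happens'[OF \<open>from_left_of b \<noteq> bot\<close> eventually_from_left_of]
    by (auto simp: einterval_iff)
  with in_I[OF \<theta>] show "{x \<in> einterval a b. \<theta> < x} \<noteq> {}" by blast
  show "eventually (\<lambda>z. z \<in> {x \<in> einterval a b. \<theta> < x}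
          \<and> bregman \<phi> \<phi>' x \<theta> < bregman \<phi> \<phi>' z \<theta>) (from_left_of b)"
    if x: "x \<in> {x \<in> einterval a b. \<theta> < x}" for x
  proof -
    have "ereal x < b" using x by (simp add: einterval_iff)
    from eventually_from_left_of[OF this] show ?thesis
      by (rule eventually_mono) (use x in \<open>auto intro!: bregman_strict_mono_right \<theta> in_I[of x]\<close>)
  qed
  show "connected (insert 0 ((\<lambda>x. bregman \<phi> \<phi>' x \<theta>) ` {x \<in> einterval a b. \<theta> < x}))"
  proof (rule connected_insert_0_image_bregman[OF \<theta>])
    have "insert \<theta> {x \<in> einterval a b. \<theta> < x} = einterval a b \<inter> {\<theta>..}"
      using \<theta> by auto
    then show "connected (insert \<theta> {x \<in> einterval a b. \<theta> < x})"
      by (simp add: convex_connected convex_Int convex_einterval)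
  qed auto
qed (use \<theta> bregman_pos in auto)

lemma image_bregman_left:
  assumes \<theta>: "\<theta> \<in> einterval a b"
    and lim: "((\<lambda>x. ereal (bregman \<phi> \<phi>' x \<theta>)) \<longlongrightarrow> \<zeta>) (from_right_of a)"
  shows "(\<lambda>x. bregman \<phi> \<phi>' x \<theta>) ` {x \<in> einterval a b. x < \<theta>} = einterval 0 \<zeta>"
proof (rule image_eq_einterval_0_of_tendsto[OF _ _ _ lim])
  have in_I: "z \<in> einterval a b" if "x \<in> einterval a b" "z < x" "a < ereal z" for x z
    using that by (auto simp: einterval_iff intro: less_trans[of "ereal z" "ereal x" b])
  from \<theta> show "from_right_of a \<noteq> bot"
    by (intro from_right_of_neq_bot) (auto simp: einterval_iff)
  from \<theta> obtain z where "z < \<theta>" "a < ereal z"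
    using eventually_happens'[OF \<open>from_right_of a \<noteq> bot\<close> eventually_from_right_of]
    by (auto simp: einterval_iff)
  with in_I[OF \<theta>] show "{x \<in> einterval a b. x < \<theta>} \<noteq> {}" by blast
  show "eventually (\<lambda>z. z \<in> {x \<in> einterval a b. x < \<theta>}
          \<and> bregman \<phi> \<phi>' x \<theta> < bregman \<phi> \<phi>' z \<theta>) (from_right_of a)"
    if x: "x \<in> {x \<in> einterval a b. x < \<theta>}" for x
  proof -
    have "a < ereal x" using x by (simp add: einterval_iff)
    from eventually_from_right_of[OF this] show ?thesis
      by (rule eventually_mono) (use x in \<open>auto intro!: bregman_strict_antimono_left \<theta> in_I[of x]\<close>)
  qed
  show "connected (insert 0 ((\<lambda>x. bregman \<phi> \<phi>' x \<theta>) ` {x \<in> einterval a b. x < \<theta>}))"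
  proof (rule connected_insert_0_image_bregman[OF \<theta>])
    have "insert \<theta> {x \<in> einterval a b. x < \<theta>} = einterval a b \<inter> {..\<theta>}"
      using \<theta> by auto
    then show "connected (insert \<theta> {x \<in> einterval a b. x < \<theta>})"
      by (simp add: convex_connected convex_Int convex_einterval)
  qed auto
qed (use \<theta> bregman_pos in auto)

lemma borel_measurable_indicator_comp_bregman:
  fixes F :: "real \<Rightarrow> real"
  assumes \<theta>: "\<theta> \<in> einterval a b" and F: "(\<lambda>t. F (max 0 t)) \<in> borel_measurable borel"
  shows "(\<lambda>x. indicator (einterval a b) x * F (bregman \<phi> \<phi>' x \<theta>)) \<in> borel_measurable borel"
proof -
  have "(\<lambda>x. indicator (einterval a b) x *\<^sub>R bregman \<phi> \<phi>' x \<theta>) \<in> borel_measurable borel"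
    by (intro borel_measurable_continuous_on_indicator continuous_on_bregman) simp
  from measurable_compose[OF this F]
  have "(\<lambda>x. indicator (einterval a b) x * F (max 0 (indicator (einterval a b) x * bregman \<phi> \<phi>' x \<theta>)))
    \<in> borel_measurable borel" by simp
  moreover have "indicator (einterval a b) x * F (max 0 (indicator (einterval a b) x * bregman \<phi> \<phi>' x \<theta>))
      = indicator (einterval a b) x * F (bregman \<phi> \<phi>' x \<theta>)" for x
    using bregman_nonneg[OF \<theta>, of x] by (simp add: indicator_def max_def)
  ultimately show ?thesis by simp
qed

lemma set_integral_bregman_branches_cancel:
  fixes G :: "real \<Rightarrow> real"
  assumes \<theta>: "\<theta> \<in> einterval a b"
    and lim_a: "((\<lambda>x. ereal (bregman \<phi> \<phi>' x \<theta>)) \<longlongrightarrow> \<zeta>) (from_right_of a)"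
    and lim_b: "((\<lambda>x. ereal (bregman \<phi> \<phi>' x \<theta>)) \<longlongrightarrow> \<zeta>) (from_left_of b)"
    and G: "G absolutely_integrable_on einterval 0 \<zeta>"
  shows "(\<lambda>x. (\<phi>' x - \<phi>' \<theta>) * G (bregman \<phi> \<phi>' x \<theta>)) absolutely_integrable_on einterval a b"
    and "(LINT x:einterval a b|lebesgue. (\<phi>' x - \<phi>' \<theta>) * G (bregman \<phi> \<phi>' x \<theta>)) = 0"
proof -
  let ?S\<^sub>1 = "{x \<in> einterval a b. \<theta> < x}" and ?S\<^sub>2 = "{x \<in> einterval a b. x < \<theta>}"
  let ?F = "\<lambda>x. (\<phi>' x - \<phi>' \<theta>) * G (bregman \<phi> \<phi>' x \<theta>)"
  have "?S\<^sub>1 \<in> sets lebesgue" "?S\<^sub>2 \<in> sets lebesgue" "?S\<^sub>1 \<inter> ?S\<^sub>2 = {}"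
    by auto
  then have "?F absolutely_integrable_on (?S\<^sub>1 \<union> ?S\<^sub>2)" "(LINT x:?S\<^sub>1 \<union> ?S\<^sub>2|lebesgue. ?F x) = 0"
    using set_integral_opposite_branches_cancel[of ?S\<^sub>1 ?S\<^sub>2 "\<lambda>x. bregman \<phi> \<phi>' x \<theta>"
        "\<lambda>x. \<phi>' x - \<phi>' \<theta>" "einterval 0 \<zeta>" G]
      has_real_derivative_bregman inj_on_bregman_right[OF \<theta>] inj_on_bregman_left[OF \<theta>]
      image_bregman_right[OF \<theta> lim_b] image_bregman_left[OF \<theta> lim_a] G
      deriv_strict_mono[OF \<theta>] deriv_strict_mono[OF _ \<theta>]
    by auto
  moreover have "(\<lambda>x. indicator (einterval a b) x *\<^sub>R ?F x) = (\<lambda>x. indicator (?S\<^sub>1 \<union> ?S\<^sub>2) x *\<^sub>R ?F x)"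
    by (rule ext, cases "x = \<theta>") (auto simp: indicator_def)
  ultimately show "?F absolutely_integrable_on einterval a b"
    and "(LINT x:einterval a b|lebesgue. ?F x) = 0"
    unfolding set_integrable_def set_lebesgue_integral_def by simp_all
qed

end

theorem mainTheorem3:
  fixes a b :: ereal and \<phi> \<phi>' g f f' :: "real \<Rightarrow> real" and \<zeta> :: ereal
    and \<theta> C :: real
  assumes ab: "a < b"
    and sconv: "strictly_convex_on (ereal_ioo a b) \<phi>"
    and deriv: "\<And>x. x \<in> ereal_ioo a b \<Longrightarrow> (\<phi> has_real_derivative \<phi>' x) (at x)"
    and cont: "continuous_on (ereal_ioo a b) \<phi>'"
    and zeta_pos: "0 < \<zeta>"
    and lim_a: "\<And>t. t \<in> ereal_ioo a b \<Longrightarrow>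
                 ((\<lambda>x. ereal (bregman \<phi> \<phi>' x t)) \<longlongrightarrow> \<zeta>) (from_right_of a)"
    and lim_b: "\<And>t. t \<in> ereal_ioo a b \<Longrightarrow>
                 ((\<lambda>x. ereal (bregman \<phi> \<phi>' x t)) \<longlongrightarrow> \<zeta>) (from_left_of b)"
    and g_meas: "g \<in> borel_measurable (restrict_space lborel {0..})"
    and g_nonneg: "\<And>t. 0 \<le> t \<Longrightarrow> 0 \<le> g t"
    and theta: "\<theta> \<in> ereal_ioo a b"
    and C_int: "set_integrable lborel (ereal_ioo a b) (bregman_kernel \<phi> \<phi>' g \<theta>)"
    and C_def: "C = (LINT x:ereal_ioo a b|lborel. bregman_kernel \<phi> \<phi>' g \<theta> x)"
    and C_pos: "0 < C"
    and f_deriv: "\<And>t. 0 \<le> t \<Longrightarrow> (f has_real_derivative f' t) (at t within {0..})"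
    and fin: "(\<integral>\<^sup>+ t\<in>{0..}. ennreal (g t * \<bar>f' t\<bar>) \<partial>lborel) < \<infinity>"
  shows "set_integrable lborel (ereal_ioo a b)
           (\<lambda>x. bregman_kernel \<phi> \<phi>' g \<theta> x / C * f' (bregman \<phi> \<phi>' x \<theta>) * (x - \<theta>))
       \<and> (LINT x:ereal_ioo a b|lborel.
           bregman_kernel \<phi> \<phi>' g \<theta> x / C * f' (bregman \<phi> \<phi>' x \<theta>) * (x - \<theta>)) = 0"
proof -
  interpret bregman_interval a b \<phi> \<phi>'
    using sconv deriv by unfold_locales (simp_all add: ereal_ioo_eq_einterval)
  let ?I = "einterval a b" and ?D = "\<lambda>x. bregman \<phi> \<phi>' x \<theta>"
  let ?K = "\<lambda>x. bregman_kernel \<phi> \<phi>' g \<theta> x / C * f' (?D x) * (x - \<theta>)"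
  have \<theta>: "\<theta> \<in> ?I" using theta by (simp add: ereal_ioo_eq_einterval)
  have "set_integrable lborel (einterval 0 \<zeta>) (\<lambda>t. g t * f' t)"
    using set_integrable_weighted_deriv_on_nonneg[OF g_meas g_nonneg f_deriv fin]
    by (rule set_integrable_subset) (auto simp: einterval_iff)
  note cancel = set_integral_bregman_branches_cancel[OF \<theta> lim_a[OF theta] lim_b[OF theta]
      set_integrable_lborel_imp_lebesgue[OF this]]
  \<comment> \<open>the factor x - \<theta> cancels the difference quotient in the kernel (both sides vanish at \<theta>)\<close>
  have K_eq: "?K x = (\<phi>' x - \<phi>' \<theta>) * (g (?D x) * f' (?D x)) / C" for x
    by (cases "x = \<theta>") (auto simp: bregman_kernel_def)
  have lebesgue: "set_integrable lebesgue ?I ?K" "(LINT x:?I|lebesgue. ?K x) = 0"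
    using cancel unfolding K_eq by simp_all
  have "(\<lambda>x. indicator ?I x *\<^sub>R ?K x) = (\<lambda>x. (indicator ?I x *\<^sub>R bregman_kernel \<phi> \<phi>' g \<theta> x)
      * (indicator ?I x * f' (?D x)) * (x - \<theta>) / C)"
    by (auto simp: indicator_def)
  moreover note borel_measurable_integrable[OF C_int[unfolded set_integrable_def]]
    borel_measurable_indicator_comp_bregman[OF \<theta> borel_measurable_deriv_on_nonneg[OF f_deriv]]
  ultimately have "(\<lambda>x. indicator ?I x *\<^sub>R ?K x) \<in> borel_measurable borel"
    by (simp add: ereal_ioo_eq_einterval measurable_lborel2)
  from set_integrable_lebesgue_imp_lborel[OF lebesgue(1) this] lebesgue(2)
  show ?thesis by (auto simp: ereal_ioo_eq_einterval)
qed

end
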